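(* The metric space $L_\infty$ satisfies $\operatorname{trasdim} L_\infty=\infty$.
   Context: Let $X=\bigsqcup_{i=1}^\infty\mathbb Z^i$ (disjoint union). For $a=(a_1,\dots,a_l)\in\mathbb Z^l$ and $b=(b_1,\dots,b_k)\in\mathbb Z^k$ with $l\le k$, let $a'=(a_1,\dots,a_l,0,\dots,0)\in\mathbb Z^k$, let $c=0$ if $l=k$ and $c=l+(l+1)+\dots+(k-1)$ if $l<k$, and set $d_\infty(a,b)=d_\infty(b,a)=\max\{d(a',b),c\}$, where $d$ is the sup-metric $d(x,y)=\max_j|x_j-y_j|$ on $\mathbb Z^k$. $L_\infty=(X,d_\infty)$. A family $\mathcal A$ of subsets is uniformly bounded if there is $C>0$ with $\operatorname{diam}A\le C$ for all $A\in\mathcal A$; it is $r$-disjoint if $d(A_1,A_2)\ge r$ for all distinct $A_1,A_2\in\mathcal A$. For a set $L$, $\mathrm{Fin}\,L$ is the collection of finite nonempty subsets of $L$. For $M\subset \mathrm{Fin}\,L$ and $\sigma\in\{\emptyset\}\cup\mathrm{Fin}\,L$, $M^\sigma=\{\tau\in\mathrm{Fin}\,L:\sigma\cup\tau\in M,\ \sigma\cap\tau=\emptyset\}$, and $M^a=M^{\{a\}}$. The ordinal $\operatorname{Ord}M$: $\operatorname{Ord}M=0$ iff $M=\emptyset$; $\operatorname{Ord}M\le\alpha$ iff $\operatorname{Ord}M^a<\alpha$ for every $a\in L$; $\operatorname{Ord}M=\alpha$ iff $\operatorname{Ord}M\le\alpha$ and not $\operatorname{Ord}M<\alpha$; $\operatorname{Ord}M=\infty$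 iff $\operatorname{Ord} M\le\alpha$ for no ordinal $\alpha$. For a metric space $(X,d)$, $A(X,d)$ is the set of $\sigma\in\mathrm{Fin}\,\mathbb N$ such that there do NOT exist uniformly bounded families $\mathcal V_i$, $i\in\sigma$, with $\bigcup_{i\in\sigma}\mathcal V_i$ covering $X$ and each $\mathcal V_i$ being $i$-disjoint. Define $\operatorname{trasdim}X=\operatorname{Ord}A(X,d)$, except $\operatorname{trasdim}X=-1$ iff $X$ is bounded. *)

theory Defs
  imports Main "HOL-Library.Extended_Real"
begin

text \<open>Points of X = disjoint union of Z^i (i \<ge> 1) are represented as nonempty
  integer lists; a list of length l is a point of Z^l.\<close>

definition Linf_carrier :: "int list set" where
  "Linf_carrier = {a. a \<noteq> []}"

definition sup_dist :: "int list \<Rightarrow> int list \<Rightarrow> real" where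
  "sup_dist x y = Max ((\<lambda>j. real_of_int \<bar>x ! j - y ! j\<bar>) ` {..<length y})"

definition dinf_aux :: "int list \<Rightarrow> int list \<Rightarrow> real" where
  "dinf_aux a b =
     (let l = length a; k = length b;
          a' = a @ replicate (k - l) 0;
          c = (if l = k then 0 else (\<Sum>i\<in>{l..<k}. i))
      in max (sup_dist a' b) (real c))"

definition dinf :: "int list \<Rightarrow> int list \<Rightarrow> real" where
  "dinf a b = (if length a \<le> length b then dinf_aux a b else dinf_aux b a)"

definition unif_bounded :: "('a \<Rightarrow> 'a \<Rightarrow> real) \<Rightarrow> 'a set set \<Rightarrow> bool" where
  "unif_bounded d V \<longleftrightarrow> (\<exists>C>0. \<forall>A\<in>V. \<forall>x\<in>A. \<forall>y\<in>A. d x y \<le> C)"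

definition r_disjoint :: "('a \<Rightarrow> 'a \<Rightarrow> real) \<Rightarrow> real \<Rightarrow> 'a set set \<Rightarrow> bool" where
  "r_disjoint d r V \<longleftrightarrow>
     (\<forall>A1\<in>V. \<forall>A2\<in>V. A1 \<noteq> A2 \<longrightarrow> (\<forall>x\<in>A1. \<forall>y\<in>A2. r \<le> d x y))"

definition bounded_space :: "'a set \<Rightarrow> ('a \<Rightarrow> 'a \<Rightarrow> real) \<Rightarrow> bool" where
  "bounded_space X d \<longleftrightarrow> (\<exists>C. \<forall>x\<in>X. \<forall>y\<in>X. d x y \<le> C)"

definition Fin :: "'l set \<Rightarrow> 'l set set" where
  "Fin L = {s. finite s \<and> s \<noteq> {} \<and> s \<subseteq> L}"

definition deriv :: "'l set \<Rightarrow> 'l set set \<Rightarrow> 'l set \<Rightarrow> 'l set set" where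
  "deriv L M \<sigma> = {\<tau> \<in> Fin L. \<sigma> \<union> \<tau> \<in> M \<and> \<sigma> \<inter> \<tau> = {}}"

text \<open>ord_le L M \<alpha> means Ord M \<le> \<alpha>, with ordinals represented by elements of
  an arbitrary well-ordered type: Ord M \<le> \<alpha> iff M = {} (Ord M = 0) or
  Ord M^a < \<alpha> (i.e. Ord M^a \<le> \<beta> for some \<beta> < \<alpha>) for every a \<in> L.\<close>
inductive ord_le :: "'l set \<Rightarrow> 'l set set \<Rightarrow> 'o::wellorder \<Rightarrow> bool" for L where
  ord_le_empty: "ord_le L {} \<alpha>"
| ord_le_step: "(\<forall>a\<in>L. \<exists>\<beta><\<alpha>. ord_le L (deriv L M {a}) \<beta>) \<Longrightarrow> ord_le L M \<alpha>"

text \<open>N is taken to be the positive naturals.\<close>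
definition posnat :: "nat set" where "posnat = {n. 1 \<le> n}"

definition A_set :: "'a set \<Rightarrow> ('a \<Rightarrow> 'a \<Rightarrow> real) \<Rightarrow> nat set set" where
  "A_set X d = {\<sigma> \<in> Fin posnat.
     \<not> (\<exists>V :: nat \<Rightarrow> 'a set set.
          (\<forall>i\<in>\<sigma>. V i \<subseteq> Pow X \<and> unif_bounded d (V i) \<and> r_disjoint d (real i) (V i))
          \<and> X \<subseteq> \<Union>(\<Union>i\<in>\<sigma>. V i))}"

text \<open>trasdim X = \<infinity>: X is unbounded (so trasdim \<noteq> -1) and Ord A(X,d) = \<infinity>,
  where the ordinals range over the well-ordered type 'o.\<close>
definition trasdim_infinite :: "'o::wellorder itself \<Rightarrow> 'a set \<Rightarrow> ('a \<Rightarrow> 'a \<Rightarrow> real) \<Rightarrow> bool" where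
  "trasdim_infinite _ X d \<longleftrightarrow>
     \<not> bounded_space X d \<and> (\<forall>(\<alpha>::'o). \<not> ord_le posnat (A_set X d) \<alpha>)"

end

theory Submission
  imports Defs "HOL-Analysis.Brouwer_Fixpoint"
begin

text \<open>
  Every finite nonempty \<sigma> \<subseteq> {2, 3, ...} lies in A(L_\<infinity>). Indeed, with n = |\<sigma>|, the
  copy of \<int>^n inside L_\<infinity> carries the sup-metric, and a discrete form of the Lebesgue
  covering theorem, obtained from Kuhn's combinatorial lemma, shows that the grid \<nat>^n is
  not covered by n uniformly bounded families that are each 2-disjoint. A family M containing
  all finite nonempty subsets of an infinite set S has no ordinal: for a \<in> S the derived
  family M^a contains all finite nonempty subsets of S - {a}, so the recursion defining
  Ord M never bottoms out.
\<close>

lemma not_ord_le_if_Fin_subset: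
  assumes "Fin S \<subseteq> M" "infinite S" "S \<subseteq> L"
  shows "\<not> ord_le L M \<alpha>"
proof
  assume "ord_le L M \<alpha>"
  then show False
    using assms
  proof (induction arbitrary: S)
    case (ord_le_empty \<alpha>)
    obtain a where "a \<in> S" using infinite_imp_nonempty[OF \<open>infinite S\<close>] by blast
    then have "{a} \<in> Fin S" by (simp add: Fin_def)
    with ord_le_empty show False by blast
  next
    case (ord_le_step \<alpha> M)
    obtain a where a: "a \<in> S" using infinite_imp_nonempty[OF \<open>infinite S\<close>] by blast
    then have "a \<in> L" using ord_le_step.prems(3) by blast
    with ord_le_step.IH have
      IH: "\<And>S'. Fin S' \<subseteq> Defs.deriv L M {a} \<Longrightarrow> infinite S' \<Longrightarrow> S' \<subseteq> L \<Longrightarrow> False"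
      by fast
    have "Fin (S - {a}) \<subseteq> Defs.deriv L M {a}"
    proof
      fix \<tau> assume "\<tau> \<in> Fin (S - {a})"
      then have "\<tau> \<in> Fin L" "{a} \<union> \<tau> \<in> Fin S" "{a} \<inter> \<tau> = {}"
        using a ord_le_step.prems(3) by (auto simp: Fin_def)
      then show "\<tau> \<in> Defs.deriv L M {a}"
        using ord_le_step.prems(1) by (auto simp: Defs.deriv_def)
    qed
    moreover have "infinite (S - {a})" "S - {a} \<subseteq> L"
      using ord_le_step.prems(2,3) by auto
    ultimately show False by (rule IH)
  qed
qed

lemma unif_bounded_Un:
  assumes "unif_bounded d V" "unif_bounded d W"
  shows "unif_bounded d (V \<union> W)"
proof -
  obtain C where "C > 0" and V: "\<forall>A\<in>V. \<forall>x\<in>A. \<forall>y\<in>A. d x y \<le> C"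
    using assms(1) unfolding unif_bounded_def by blast
  obtain C' where "C' > 0" and W: "\<forall>A\<in>W. \<forall>x\<in>A. \<forall>y\<in>A. d x y \<le> C'"
    using assms(2) unfolding unif_bounded_def by blast
  have "d x y \<le> C + C'" if "A \<in> V \<union> W" "x \<in> A" "y \<in> A" for A x y
  proof -
    have "d x y \<le> C \<or> d x y \<le> C'" using that V W by blast
    then show ?thesis using \<open>C > 0\<close> \<open>C' > 0\<close> by linarith
  qed
  moreover have "C + C' > 0" using \<open>C > 0\<close> \<open>C' > 0\<close> by simp
  ultimately show ?thesis
    unfolding unif_bounded_def by blast
qed

lemma unif_bounded_UN:
  assumes "finite I" "\<And>i. i \<in> I \<Longrightarrow> unif_bounded d (V i)"
  shows "unif_bounded d (\<Union>i\<in>I. V i)"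
  using assms
proof (induction I rule: finite_induct)
  case empty
  show ?case unfolding unif_bounded_def by (intro exI[of _ 1]) simp
next
  case (insert i I)
  then have "unif_bounded d (V i \<union> (\<Union>i\<in>I. V i))"
    by (intro unif_bounded_Un) auto
  then show ?case by simp
qed

definition unit_cell :: "nat \<Rightarrow> (nat \<Rightarrow> nat) \<Rightarrow> (nat \<Rightarrow> nat) set" where
  "unit_cell n q = {x. \<forall>k<n. q k \<le> x k \<and> x k \<le> q k + 1}"

lemma kuhn_lemma_sides:
  fixes p n :: nat and P :: "nat \<Rightarrow> (nat \<Rightarrow> nat) \<Rightarrow> bool"
  assumes "0 < p"
    and "\<And>x j. j < n \<Longrightarrow> x j = 0 \<Longrightarrow> P j x"
    and "\<And>x j. j < n \<Longrightarrow> x j = p \<Longrightarrow> \<not> P j x"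
  obtains q where "\<forall>j<n. \<exists>r\<in>unit_cell n q. \<exists>s\<in>unit_cell n q. P j r \<and> \<not> P j s"
proof -
  obtain q where q: "\<forall>j<n. \<exists>r s. (\<forall>k<n. q k \<le> r k \<and> r k \<le> q k + 1)
      \<and> (\<forall>k<n. q k \<le> s k \<and> s k \<le> q k + 1) \<and> (if P j r then 0 else 1::nat) \<noteq> (if P j s then 0 else 1)"
    by (rule kuhn_lemma[of p n "\<lambda>x j. if P j x then 0 else 1"]) (use assms in auto)
  have "\<exists>r\<in>unit_cell n q. \<exists>s\<in>unit_cell n q. P j r \<and> \<not> P j s" if "j < n" for j
  proof -
    obtain r s where "r \<in> unit_cell n q" "s \<in> unit_cell n q" "P j r \<noteq> P j s"
      using q \<open>j < n\<close> unfolding unit_cell_def by (smt (verit) mem_Collect_eq)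
    then show ?thesis by metis
  qed
  then show ?thesis using that by blast
qed

lemma grid_not_covered_by_separated_families:
  fixes U :: "nat \<Rightarrow> (nat \<Rightarrow> nat) set set" and C :: nat
  assumes cover: "\<And>z. \<exists>j<n. \<exists>B\<in>U j. z \<in> B"
    and separated: "\<And>j B B' z z'. j < n \<Longrightarrow> B \<in> U j \<Longrightarrow> B' \<in> U j \<Longrightarrow> z \<in> B \<Longrightarrow> z' \<in> B' \<Longrightarrow>
        \<forall>k<n. \<bar>int (z k) - int (z' k)\<bar> \<le> 1 \<Longrightarrow> B = B'"
    and bounded: "\<And>j B z z'. j < n \<Longrightarrow> B \<in> U j \<Longrightarrow> z \<in> B \<Longrightarrow> z' \<in> B \<Longrightarrow> z j \<le> z' j + C"
  shows False
proof -
  define p where "p = C + 2"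
  define near where "near x B \<longleftrightarrow> (\<exists>z\<in>B. x \<in> unit_cell n z)" for x B
  define low where "low j B \<longleftrightarrow> (\<exists>z\<in>B. z j = 0)" for j and B :: "(nat \<Rightarrow> nat) set"
  \<comment> \<open>x lies on the side of the face x j = 0: on it, or near a member of U j that touches it.
    Boundedness keeps the opposite face off this side; separation makes the side constant
    on a unit cell with a corner in a member of U j, whereas Kuhn's lemma yields a cell on
    which every side changes.\<close>
  define side where "side j x \<longleftrightarrow> x j = 0 \<or> (\<exists>B\<in>U j. near x B \<and> low j B)" for j x
  have unique_near: "B = B'"
    if UB: "j < n" "B \<in> U j" "B' \<in> U j" and near: "near x B" "near x B'" for j x B B'
  proof -
    obtain z z' where "z \<in> B" "z' \<in> B'" "x \<in> unit_cell n z" "x \<in> unit_cell n z'"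
      using near unfolding near_def by blast
    then have "\<forall>k<n. \<bar>int (z k) - int (z' k)\<bar> \<le> 1" by (fastforce simp: unit_cell_def)
    then show ?thesis using separated UB \<open>z \<in> B\<close> \<open>z' \<in> B'\<close> by blast
  qed
  have side_at_bottom: "side j x" if "j < n" "x j = 0" for j x
    using that by (simp add: side_def)
  have not_side_at_top: "\<not> side j x" if "j < n" "x j = p" for j x
  proof
    assume "side j x"
    moreover have "x j \<noteq> 0" using \<open>x j = p\<close> by (simp add: p_def)
    ultimately obtain B where "B \<in> U j" "near x B" "low j B"
      unfolding side_def by blast
    then obtain z z' where "z \<in> B" "x j \<le> z j + 1" "z' \<in> B" "z' j = 0"
      using \<open>j < n\<close> unfolding near_def low_def unit_cell_def by blast
    then show False
      using bounded[OF \<open>j < n\<close> \<open>B \<in> U j\<close>, of z z'] \<open>x j = p\<close> by (simp add: p_def)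
  qed
  have "0 < p" by (simp add: p_def)
  from this side_at_bottom not_side_at_top
  obtain q where q: "\<forall>j<n. \<exists>r\<in>unit_cell n q. \<exists>s\<in>unit_cell n q. side j r \<and> \<not> side j s"
    by (rule kuhn_lemma_sides)
  obtain j W where "j < n" "W \<in> U j" "q \<in> W" using cover by blast
  have side_cell: "side j x \<longleftrightarrow> low j W" if "x \<in> unit_cell n q" for x
  proof -
    have "near x W" using that \<open>q \<in> W\<close> unfolding near_def by blast
    have "B = W" if "B \<in> U j" "near x B" for B
      using unique_near[OF \<open>j < n\<close> that(1) \<open>W \<in> U j\<close> that(2) \<open>near x W\<close>] .
    moreover have "x j = 0 \<Longrightarrow> low j W"
      using that \<open>j < n\<close> \<open>q \<in> W\<close> unfolding low_def unit_cell_def by force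
    ultimately show ?thesis
      using \<open>near x W\<close> \<open>W \<in> U j\<close> unfolding side_def by blast
  qed
  obtain r s where "r \<in> unit_cell n q" "s \<in> unit_cell n q" "side j r" "\<not> side j s"
    using q \<open>j < n\<close> by blast
  then show False using side_cell by blast
qed

definition grid_point :: "nat \<Rightarrow> (nat \<Rightarrow> nat) \<Rightarrow> int list" where
  "grid_point n z = map (\<lambda>k. int (z k)) [0..<n]"

definition grid_pullback :: "nat \<Rightarrow> int list set set \<Rightarrow> (nat \<Rightarrow> nat) set set" where
  "grid_pullback n V = (\<lambda>A. {z. grid_point n z \<in> A}) ` V"

lemma grid_point_in_Linf_carrier: "0 < n \<Longrightarrow> grid_point n z \<in> Linf_carrier"
  by (simp add: grid_point_def Linf_carrier_def)

lemma dinf_grid_point: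
  assumes "0 < n"
  shows "dinf (grid_point n z) (grid_point n z') =
    Max ((\<lambda>k. real_of_int \<bar>int (z k) - int (z' k)\<bar>) ` {..<n})"
proof -
  have "0 \<le> real_of_int \<bar>int (z 0) - int (z' 0)\<bar>" by simp
  also have "\<dots> \<le> Max ((\<lambda>k. real_of_int \<bar>int (z k) - int (z' k)\<bar>) ` {..<n})"
    using assms by (intro Max_ge) auto
  finally have "0 \<le> Max ((\<lambda>k. real_of_int \<bar>int (z k) - int (z' k)\<bar>) ` {..<n})" .
  then show ?thesis
    unfolding dinf_def dinf_aux_def sup_dist_def grid_point_def Let_def by simp
qed

lemma coordinate_dist_le_dinf_grid_point:
  "k < n \<Longrightarrow> real_of_int \<bar>int (z k) - int (z' k)\<bar> \<le> dinf (grid_point n z) (grid_point n z')"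
  by (subst dinf_grid_point) auto

lemma dinf_grid_point_le:
  assumes "0 < n" "\<forall>k<n. \<bar>int (z k) - int (z' k)\<bar> \<le> c"
  shows "dinf (grid_point n z) (grid_point n z') \<le> real_of_int c"
proof -
  have "real_of_int \<bar>int (z k) - int (z' k)\<bar> \<le> real_of_int c" if "k < n" for k
    using assms(2) that of_int_le_iff by blast
  then show ?thesis
    unfolding dinf_grid_point[OF assms(1)] using assms(1) by (subst Max_le_iff) auto
qed

lemma grid_pullback_separated:
  assumes "r_disjoint dinf r V" "1 < r" "0 < n"
    and "B \<in> grid_pullback n V" "B' \<in> grid_pullback n V" "z \<in> B" "z' \<in> B'"
    and close: "\<forall>k<n. \<bar>int (z k) - int (z' k)\<bar> \<le> 1"
  shows "B = B'"
proof (rule ccontr)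
  assume "B \<noteq> B'"
  then have "r \<le> dinf (grid_point n z) (grid_point n z')"
    using assms(1,4-7) unfolding r_disjoint_def grid_pullback_def by blast
  also have "\<dots> \<le> 1"
    using dinf_grid_point_le[OF \<open>0 < n\<close> close] by simp
  finally show False using \<open>1 < r\<close> by simp
qed

lemma grid_pullback_bounded:
  assumes "\<forall>A\<in>V. \<forall>x\<in>A. \<forall>y\<in>A. dinf x y \<le> D" "k < n"
    and "B \<in> grid_pullback n V" "z \<in> B" "z' \<in> B"
  shows "z k \<le> z' k + nat \<lceil>D\<rceil>"
proof -
  have "dinf (grid_point n z) (grid_point n z') \<le> D"
    using assms(1,3-5) unfolding grid_pullback_def by blast
  then have "real_of_int \<bar>int (z k) - int (z' k)\<bar> \<le> D"
    using coordinate_dist_le_dinf_grid_point[OF \<open>k < n\<close>, of z z'] by linarith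
  then show ?thesis by linarith
qed

lemma Linf_unbounded: "\<not> bounded_space Linf_carrier dinf"
proof
  assume "bounded_space Linf_carrier dinf"
  then obtain C where C: "\<forall>x\<in>Linf_carrier. \<forall>y\<in>Linf_carrier. dinf x y \<le> C"
    unfolding bounded_space_def by blast
  define N :: nat where "N = nat \<lceil>C\<rceil> + 1"
  have "real N \<le> dinf (grid_point 1 (\<lambda>_. 0)) (grid_point 1 (\<lambda>_. N))"
    using coordinate_dist_le_dinf_grid_point[of 0 1 "\<lambda>_. 0" "\<lambda>_. N"] by simp
  also have "\<dots> \<le> C"
    using C grid_point_in_Linf_carrier[of 1 "\<lambda>_. 0"] grid_point_in_Linf_carrier[of 1 "\<lambda>_. N"]
    by simp
  finally show False unfolding N_def by linarith
qed

lemma Linf_not_covered_by_separated_families: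
  assumes "finite \<sigma>" "\<sigma> \<noteq> {}" "\<sigma> \<subseteq> {2..}"
    and bounded: "\<And>i. i \<in> \<sigma> \<Longrightarrow> unif_bounded dinf (V i)"
    and disjoint: "\<And>i. i \<in> \<sigma> \<Longrightarrow> r_disjoint dinf (real i) (V i)"
    and cover: "Linf_carrier \<subseteq> \<Union>(\<Union>i\<in>\<sigma>. V i)"
  shows False
proof -
  have "unif_bounded dinf (\<Union>i\<in>\<sigma>. V i)"
    using \<open>finite \<sigma>\<close> bounded by (rule unif_bounded_UN)
  then obtain D where D: "\<forall>A\<in>(\<Union>i\<in>\<sigma>. V i). \<forall>x\<in>A. \<forall>y\<in>A. dinf x y \<le> D"
    unfolding unif_bounded_def by blast
  define n where "n = card \<sigma>"
  have "0 < n" using assms(1,2) by (simp add: n_def card_gt_0_iff)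
  obtain e where e: "bij_betw e {0..<n} \<sigma>"
    using ex_bij_betw_nat_finite[OF \<open>finite \<sigma>\<close>] unfolding n_def by blast
  then have e_in: "e j \<in> \<sigma>" if "j < n" for j
    using that by (auto simp: bij_betw_def)
  show False
  proof (rule grid_not_covered_by_separated_families[of n "\<lambda>j. grid_pullback n (V (e j))"])
    fix z
    obtain i A where "i \<in> \<sigma>" "A \<in> V i" "grid_point n z \<in> A"
      using cover grid_point_in_Linf_carrier[OF \<open>0 < n\<close>] by blast
    moreover obtain j where "j < n" "e j = i"
      using e \<open>i \<in> \<sigma>\<close> by (auto simp: bij_betw_def)
    ultimately show "\<exists>j<n. \<exists>B\<in>grid_pullback n (V (e j)). z \<in> B"
      unfolding grid_pullback_def by blast
  next
    fix j B B' z z'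
    assume "j < n" and pullback: "B \<in> grid_pullback n (V (e j))" "B' \<in> grid_pullback n (V (e j))"
      "z \<in> B" "z' \<in> B'" "\<forall>k<n. \<bar>int (z k) - int (z' k)\<bar> \<le> 1"
    have "e j \<in> \<sigma>" using e_in \<open>j < n\<close> .
    then have "1 < real (e j)" using \<open>\<sigma> \<subseteq> {2..}\<close> by force
    from disjoint[OF \<open>e j \<in> \<sigma>\<close>] this \<open>0 < n\<close> pullback show "B = B'"
      by (rule grid_pullback_separated)
  next
    fix j B z z'
    assume "j < n" "B \<in> grid_pullback n (V (e j))" "z \<in> B" "z' \<in> B"
    have "\<forall>A\<in>V (e j). \<forall>x\<in>A. \<forall>y\<in>A. dinf x y \<le> D"
      using D e_in[OF \<open>j < n\<close>] by blast
    then show "z j \<le> z' j + nat \<lceil>D\<rceil>"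
      using \<open>j < n\<close> \<open>B \<in> grid_pullback n (V (e j))\<close> \<open>z \<in> B\<close> \<open>z' \<in> B\<close>
      by (rule grid_pullback_bounded)
  qed
qed

lemma Fin_subset_A_set_Linf: "Fin {2..} \<subseteq> A_set Linf_carrier dinf"
proof
  fix \<sigma> :: "nat set" assume \<sigma>: "\<sigma> \<in> Fin {2..}"
  have "\<not> (\<exists>V :: nat \<Rightarrow> int list set set.
          (\<forall>i\<in>\<sigma>. V i \<subseteq> Pow Linf_carrier \<and> unif_bounded dinf (V i) \<and> r_disjoint dinf (real i) (V i))
          \<and> Linf_carrier \<subseteq> \<Union>(\<Union>i\<in>\<sigma>. V i))"
  proof (rule notI, elim exE conjE)
    fix V :: "nat \<Rightarrow> int list set set"
    assume "\<forall>i\<in>\<sigma>. V i \<subseteq> Pow Linf_carrier \<and> unif_bounded dinf (V i) \<and> r_disjoint dinf (real i) (V i)"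
      and "Linf_carrier \<subseteq> \<Union>(\<Union>i\<in>\<sigma>. V i)"
    moreover have "finite \<sigma>" "\<sigma> \<noteq> {}" "\<sigma> \<subseteq> {2..}"
      using \<sigma> by (auto simp: Fin_def)
    ultimately show False
      using Linf_not_covered_by_separated_families[of \<sigma> V] by blast
  qed
  moreover have "\<sigma> \<in> Fin posnat"
    using \<sigma> by (auto simp: Fin_def posnat_def)
  ultimately show "\<sigma> \<in> A_set Linf_carrier dinf"
    unfolding A_set_def by (intro CollectI conjI)
qed

theorem theorem3:
  shows "trasdim_infinite TYPE('o::wellorder) Linf_carrier dinf"
proof -
  have "infinite {2::nat..}" "{2::nat..} \<subseteq> posnat"
    by (auto simp: infinite_Ici posnat_def)
  with Fin_subset_A_set_Linf have "\<not> ord_le posnat (A_set Linf_carrier dinf) (\<alpha>::'o)" for \<alpha>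
    by (rule not_ord_le_if_Fin_subset)
  then show ?thesis
    unfolding trasdim_infinite_def using Linf_unbounded by blast
qed

end
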